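(* It is not true that $\lim_{n\to\infty} M(n+1)/M(n) = 2$.
   Context: For a positive integer $n$, $M(n)$ denotes the number of permutations $(t_1,\dots,t_n)$ of $\{1,2,\ldots,n\}$ that do not contain a 3-term arithmetic progression as a subsequence. Here a sequence contains a 3-term arithmetic progression as a subsequence if there are indices $i<j<k$ with $t_j - t_i = t_k - t_j \neq 0$; the common difference may be positive or negative. *)

theory Defs
  imports Complex_Main
begin

definition has_3AP :: "nat list \<Rightarrow> bool" where
  "has_3AP xs \<longleftrightarrow> (\<exists>i j k. i < j \<and> j < k \<and> k < length xs \<and>
      int (xs ! j) - int (xs ! i) = int (xs ! k) - int (xs ! j) \<and>
      int (xs ! j) - int (xs ! i) \<noteq> 0)"

definition perms_of :: "nat \<Rightarrow> nat list set" where
  "perms_of n = {xs. distinct xs \<and> set xs = {1..n}}"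

definition M :: "nat \<Rightarrow> nat" where
  "M n = card {xs \<in> perms_of n. \<not> has_3AP xs}"

end

theory Submission imports Defs begin

(* The ratio M(n+1)/M(n) cannot tend to 2.
   Upper side: if a positive ratio sequence f(n+1)/f(n) tends to L, then f(n) = O(r^n) for
   every r > L; with L = 2 and r = 41/20 this gives M(n) <= C (41/20)^n eventually.
   Lower side: a 3-AP-free permutation a of {1..n} yields the 3-AP-free lists 2a-1 (odd
   entries) and 2a (even entries); concatenating an odd-valued and an even-valued one never
   creates a 3-AP, since a 3-AP straddling both parts would have an odd sum of its outer
   terms.  Both orders of concatenation give 2 M(n)^2 <= M(2n), i.e. 2 M is supermultiplicative
   along doublings, and together with M(4) >= 10 this gives 20^(2^k) <= 2 M(4 * 2^k).
   Since 20 > (41/20)^4, the two bounds contradict each other for large k. *)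

definition ap_free_perms :: "nat \<Rightarrow> nat list set" where
  "ap_free_perms n = {xs \<in> perms_of n. \<not> has_3AP xs}"

lemma M_eq_card: "M n = card (ap_free_perms n)"
  unfolding M_def ap_free_perms_def ..

lemma ap_free_perms_perm: "a \<in> ap_free_perms n \<Longrightarrow> a \<in> perms_of n"
  unfolding ap_free_perms_def by simp

lemma perms_of_length: "xs \<in> perms_of n \<Longrightarrow> length xs = n"
  unfolding perms_of_def by (metis (mono_tags) card_atLeastAtMost diff_Suc_1 distinct_card mem_Collect_eq)

lemma finite_ap_free_perms: "finite (ap_free_perms n)"
proof (rule finite_subset)
  show "ap_free_perms n \<subseteq> {xs. set xs \<subseteq> {1..n} \<and> length xs = n}"
    using perms_of_length unfolding ap_free_perms_def perms_of_def by auto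
  show "finite {xs. set xs \<subseteq> {1..n} \<and> length xs = n}"
    by (rule finite_lists_length_eq) simp
qed

lemma has_3AP_map_affine:
  assumes affine: "\<And>x. x \<in> set xs \<Longrightarrow> int (f x) = c * int x + d" and "c \<noteq> 0"
  shows "has_3AP (map f xs) \<longleftrightarrow> has_3AP xs"
proof -
  have diff: "int (f (xs ! j)) - int (f (xs ! i)) = c * (int (xs ! j) - int (xs ! i))"
    if "i < length xs" "j < length xs" for i j
    using affine[OF nth_mem[OF that(1)]] affine[OF nth_mem[OF that(2)]] by (simp add: algebra_simps)
  have "(int (map f xs ! j) - int (map f xs ! i) = int (map f xs ! k) - int (map f xs ! j) \<and>
         int (map f xs ! j) - int (map f xs ! i) \<noteq> 0) \<longleftrightarrow>
        (int (xs ! j) - int (xs ! i) = int (xs ! k) - int (xs ! j) \<and> int (xs ! j) - int (xs ! i) \<noteq> 0)"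
    if "i < j" "j < k" "k < length xs" for i j k
    using diff[of i j] diff[of j k] that \<open>c \<noteq> 0\<close> by simp
  then show ?thesis
    unfolding has_3AP_def length_map by blast
qed

text \<open>A 3-AP in a concatenation lies in one part, unless its outer terms come from different
  parts; that is impossible when every cross sum is odd, since the outer terms of a 3-AP have
  an even sum.\<close>
lemma append_ap_free:
  assumes "\<not> has_3AP xs" "\<not> has_3AP ys" and odd_cross: "\<forall>x\<in>set xs. \<forall>y\<in>set ys. odd (x + y)"
  shows "\<not> has_3AP (xs @ ys)"
proof
  assume "has_3AP (xs @ ys)"
  then obtain i j k where ijk: "i < j" "j < k" "k < length (xs @ ys)"
    and eq: "int ((xs@ys) ! j) - int ((xs@ys) ! i) = int ((xs@ys) ! k) - int ((xs@ys) ! j)"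
    and ne: "int ((xs@ys) ! j) - int ((xs@ys) ! i) \<noteq> 0"
    unfolding has_3AP_def by blast
  let ?l = "length xs"
  consider "k < ?l" | "?l \<le> i" | "i < ?l" "?l \<le> k" by linarith
  then show False
  proof cases
    case 1
    then have "has_3AP xs" unfolding has_3AP_def using ijk eq ne
      by (intro exI[of _ i] exI[of _ j] exI[of _ k]) (simp add: nth_append)
    then show False using assms by simp
  next
    case 2
    then have "has_3AP ys" unfolding has_3AP_def using ijk eq ne
      by (intro exI[of _ "i - ?l"] exI[of _ "j - ?l"] exI[of _ "k - ?l"]) (auto simp: nth_append)
    then show False using assms by simp
  next
    case 3
    have "(xs@ys) ! i \<in> set xs" "(xs@ys) ! k \<in> set ys" using 3 ijk by (auto simp: nth_append)
    moreover have "(xs@ys) ! i + (xs@ys) ! k = 2 * (xs@ys) ! j" using eq by linarith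
    ultimately show False using odd_cross by (metis even_mult_iff even_numeral)
  qed
qed

definition to_odds :: "nat list \<Rightarrow> nat list" where
  "to_odds = map (\<lambda>x. 2 * x - 1)"

definition to_evens :: "nat list \<Rightarrow> nat list" where
  "to_evens = map (\<lambda>x. 2 * x)"

lemma inj_to_odds: "inj to_odds"
  unfolding to_odds_def by (rule inj_mapI) (auto intro: injI)

lemma inj_to_evens: "inj to_evens"
  unfolding to_evens_def by (rule inj_mapI) (auto intro: injI)

lemma set_to_odds:
  assumes "xs \<in> perms_of n" shows "set (to_odds xs) = {m \<in> {1..2*n}. odd m}"
proof -
  have "m \<in> (\<lambda>x. 2 * x - 1) ` {1..n}" if "m \<in> {1..2*n}" "odd m" for m
    using that by (intro image_eqI[of _ _ "(m + 1) div 2"]) (auto elim!: oddE)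
  then show ?thesis using assms unfolding to_odds_def perms_of_def by auto
qed

lemma set_to_evens:
  assumes "xs \<in> perms_of n" shows "set (to_evens xs) = {m \<in> {1..2*n}. even m}"
proof -
  have "m \<in> (\<lambda>x. 2 * x) ` {1..n}" if "m \<in> {1..2*n}" "even m" for m
    using that by (intro image_eqI[of _ _ "m div 2"]) (auto elim!: evenE)
  then show ?thesis using assms unfolding to_evens_def perms_of_def by auto
qed

text \<open>Both maps are affine, so they keep a 3-AP-free permutation 3-AP-free and repetition-free.\<close>
lemma to_odds_ap_free_perm:
  assumes "a \<in> ap_free_perms n" shows "distinct (to_odds a)" "\<not> has_3AP (to_odds a)"
proof -
  have a: "distinct a" "set a = {1..n}" "\<not> has_3AP a"
    using assms unfolding ap_free_perms_def perms_of_def by auto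
  show "distinct (to_odds a)"
    using a inj_to_odds unfolding to_odds_def by (auto simp: distinct_map inj_on_def)
  have "int (2 * x - 1) = 2 * int x + (-1)" if "x \<in> set a" for x
    using that a(2) by auto
  then show "\<not> has_3AP (to_odds a)"
    unfolding to_odds_def using has_3AP_map_affine[of a _ 2 "-1"] a(3) by simp
qed

lemma to_evens_ap_free_perm:
  assumes "a \<in> ap_free_perms n" shows "distinct (to_evens a)" "\<not> has_3AP (to_evens a)"
proof -
  have a: "distinct a" "\<not> has_3AP a"
    using assms unfolding ap_free_perms_def perms_of_def by auto
  show "distinct (to_evens a)"
    using a unfolding to_evens_def by (auto simp: distinct_map inj_on_def)
  show "\<not> has_3AP (to_evens a)"
    unfolding to_evens_def using has_3AP_map_affine[of a _ 2 0] a(2) by simp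
qed

lemma glue_odds_evens:
  assumes xs: "distinct xs" "\<not> has_3AP xs" "set xs = {m \<in> {1..2*n}. odd m}"
    and ys: "distinct ys" "\<not> has_3AP ys" "set ys = {m \<in> {1..2*n}. even m}"
  shows "xs @ ys \<in> ap_free_perms (2*n)" "ys @ xs \<in> ap_free_perms (2*n)"
proof -
  have cross: "\<forall>x\<in>set xs. \<forall>y\<in>set ys. odd (x + y)" "\<forall>y\<in>set ys. \<forall>x\<in>set xs. odd (y + x)"
    using xs(3) ys(3) by auto
  have "{m \<in> {1..2*n}. odd m} \<union> {m \<in> {1..2*n}. even m} = {1..2*n}" by blast
  then have "set (xs @ ys) = {1..2*n}" "set (ys @ xs) = {1..2*n}"
    using xs(3) ys(3) by (simp_all add: Un_commute)
  moreover have "distinct (xs @ ys)" "distinct (ys @ xs)"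
    using xs ys by (auto simp del: atLeastAtMost_iff)
  ultimately show "xs @ ys \<in> ap_free_perms (2*n)" "ys @ xs \<in> ap_free_perms (2*n)"
    using append_ap_free[OF xs(2) ys(2) cross(1)] append_ap_free[OF ys(2) xs(2) cross(2)]
    unfolding ap_free_perms_def perms_of_def by auto
qed

lemma inj_on_append_pair:
  assumes "inj f" "inj g" and len: "\<And>x. x \<in> A \<Longrightarrow> length (f x) = n"
  shows "inj_on (\<lambda>(x, y). f x @ g y) (A \<times> B)"
proof (rule inj_onI, clarify)
  fix x y x' y' assume "x \<in> A" "x' \<in> A" "f x @ g y = f x' @ g y'"
  then have "f x = f x'" "g y = g y'" using len by (simp_all add: append_eq_append_conv)
  then show "x = x' \<and> y = y'" using assms(1,2) by (simp add: inj_eq)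
qed

lemma glue_in_ap_free_perms:
  assumes a: "a \<in> ap_free_perms n" and b: "b \<in> ap_free_perms n"
  shows "to_odds a @ to_evens b \<in> ap_free_perms (2*n)"
    and "to_evens a @ to_odds b \<in> ap_free_perms (2*n)"
proof -
  have "a \<in> perms_of n" "b \<in> perms_of n" using a b by (simp_all add: ap_free_perms_perm)
  then have "set (to_odds a) = {m \<in> {1..2*n}. odd m}" "set (to_evens a) = {m \<in> {1..2*n}. even m}"
    "set (to_odds b) = {m \<in> {1..2*n}. odd m}" "set (to_evens b) = {m \<in> {1..2*n}. even m}"
    by (simp_all add: set_to_odds set_to_evens)
  with to_odds_ap_free_perm[OF a] to_odds_ap_free_perm[OF b]
    to_evens_ap_free_perm[OF a] to_evens_ap_free_perm[OF b]
  show "to_odds a @ to_evens b \<in> ap_free_perms (2*n)" "to_evens a @ to_odds b \<in> ap_free_perms (2*n)"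
    by (simp_all add: glue_odds_evens)
qed

text \<open>The gluings are injective on pairs and the two kinds are told apart by the parity of the
  first entry, so they give 2 M(n)^2 distinct 3-AP-free permutations of {1..2n}.\<close>
lemma M_doubling:
  assumes "n \<ge> 1"
  shows "2 * M n ^ 2 \<le> M (2 * n)"
proof -
  let ?X = "ap_free_perms n \<times> ap_free_perms n"
  define odd_first where "odd_first = (\<lambda>(a, b). to_odds a @ to_evens b)"
  define even_first where "even_first = (\<lambda>(a, b). to_evens a @ to_odds b)"
  have len: "length (to_odds a) = n" "length (to_evens a) = n" if "a \<in> ap_free_perms n" for a
    using perms_of_length[OF ap_free_perms_perm[OF that]] by (simp_all add: to_odds_def to_evens_def)
  have inj_odd_first: "inj_on odd_first ?X" and inj_even_first: "inj_on even_first ?X"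
    unfolding odd_first_def even_first_def using len
    by (simp_all add: inj_on_append_pair inj_to_odds inj_to_evens)
  have first_odd: "odd (hd (to_odds a @ ys))" and first_even: "even (hd (to_evens a @ ys))"
    if "a \<in> ap_free_perms n" for a ys
  proof -
    have "to_odds a \<noteq> []" "to_evens a \<noteq> []" using len[OF that] \<open>n \<ge> 1\<close> by auto
    then have "hd (to_odds a @ ys) \<in> set (to_odds a)" "hd (to_evens a @ ys) \<in> set (to_evens a)"
      by simp_all
    then show "odd (hd (to_odds a @ ys))" "even (hd (to_evens a @ ys))"
      using set_to_odds set_to_evens ap_free_perms_perm[OF that] by auto
  qed
  have "odd_first p \<noteq> even_first q" if pq: "p \<in> ?X" "q \<in> ?X" for p q
  proof -
    obtain a b a' b' where "p = (a, b)" "q = (a', b')" "a \<in> ap_free_perms n" "a' \<in> ap_free_perms n"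
      using pq by (cases p, cases q) auto
    then show ?thesis
      using first_odd[of a "to_evens b"] first_even[of a' "to_odds b'"]
      unfolding odd_first_def even_first_def by auto
  qed
  then have disjoint: "odd_first ` ?X \<inter> even_first ` ?X = {}" by blast
  have "2 * M n ^ 2 = card (odd_first ` ?X) + card (even_first ` ?X)"
    using card_image[OF inj_odd_first] card_image[OF inj_even_first]
    by (simp add: M_eq_card card_cartesian_product power2_eq_square)
  also have "\<dots> = card (odd_first ` ?X \<union> even_first ` ?X)"
    using disjoint finite_ap_free_perms by (simp add: card_Un_disjoint)
  also have "\<dots> \<le> M (2 * n)"
    unfolding M_eq_card using glue_in_ap_free_perms finite_ap_free_perms
    by (intro card_mono) (auto simp: odd_first_def even_first_def)
  finally show ?thesis .
qed

lemma M_iterated_doubling: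
  assumes "n \<ge> 1"
  shows "(2 * real (M n)) ^ (2 ^ k) \<le> 2 * real (M (2 ^ k * n))"
proof (induction k)
  case 0
  then show ?case by simp
next
  case (Suc k)
  have "(2 * real (M n)) ^ (2 ^ Suc k) = ((2 * real (M n)) ^ (2 ^ k))\<^sup>2"
    by (simp only: power_Suc power_even_eq)
  also have "\<dots> \<le> (2 * real (M (2 ^ k * n)))\<^sup>2"
    using Suc.IH by (intro power_mono) auto
  also have "\<dots> = 2 * real (2 * M (2 ^ k * n) ^ 2)"
    by (simp add: power2_eq_square)
  also have "\<dots> \<le> 2 * real (M (2 * (2 ^ k * n)))"
  proof -
    have "2 * M (2 ^ k * n) ^ 2 \<le> M (2 * (2 ^ k * n))"
      using M_doubling \<open>n \<ge> 1\<close> by simp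
    then have "real (2 * M (2 ^ k * n) ^ 2) \<le> real (M (2 * (2 ^ k * n)))"
      by (simp only: of_nat_le_iff)
    then show ?thesis by linarith
  qed
  finally show ?case by (simp add: mult.assoc)
qed

text \<open>has_3AP with bounded index quantifiers, so that it can be decided by simplification on
  concrete lists.\<close>
lemma has_3AP_bounded:
  "has_3AP xs \<longleftrightarrow> (\<exists>k\<in>{..<length xs}. \<exists>j\<in>{..<k}. \<exists>i\<in>{..<j}.
      int (xs ! j) - int (xs ! i) = int (xs ! k) - int (xs ! j) \<and> int (xs ! j) - int (xs ! i) \<noteq> 0)"
  unfolding has_3AP_def by (auto simp: Bex_def; meson order.strict_trans)

lemma M_four: "10 \<le> M 4"
proof -
  let ?S = "{[1,3,2,4], [1,3,4,2], [2,1,4,3], [2,4,1,3], [2,4,3,1],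
             [3,1,2,4], [3,1,4,2], [3,4,1,2], [4,2,1,3], [4,2,3,1]} :: nat list set"
  have interval: "{Suc 0..4::nat} = {Suc 0, 2, 3, 4}" by auto
  have "?S \<subseteq> ap_free_perms 4"
    unfolding ap_free_perms_def perms_of_def has_3AP_bounded
    by (simp add: lessThan_nat_numeral lessThan_Suc insert_commute interval)
  then have "card ?S \<le> M 4"
    unfolding M_eq_card using finite_ap_free_perms by (rule card_mono[rotated])
  then show ?thesis by simp
qed

corollary M_lower_bound: "(20::real) ^ (2 ^ k) \<le> 2 * real (M (2 ^ k * 4))"
proof -
  have "(20::real) ^ (2 ^ k) \<le> (2 * real (M 4)) ^ (2 ^ k)"
    using M_four by (intro power_mono) auto
  also have "\<dots> \<le> 2 * real (M (2 ^ k * 4))"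
    by (rule M_iterated_doubling) simp
  finally show ?thesis .
qed

lemma ratio_limit_growth_bound:
  fixes f :: "nat \<Rightarrow> real"
  assumes nonneg: "\<And>n. 0 \<le> f n" and lim: "(\<lambda>n. f (n + 1) / f n) \<longlonglongrightarrow> L"
    and "0 < L" "L < r"
  shows "\<exists>C. \<forall>\<^sub>F n in sequentially. f n \<le> C * r ^ n"
proof -
  have "\<forall>\<^sub>F n in sequentially. 0 < f (n + 1) / f n \<and> f (n + 1) / f n < r"
    using order_tendstoD[OF lim] \<open>0 < L\<close> \<open>L < r\<close> by (simp add: eventually_conj)
  then obtain N where N: "\<And>n. n \<ge> N \<Longrightarrow> 0 < f (n + 1) / f n \<and> f (n + 1) / f n < r"
    unfolding eventually_sequentially by blast
  have step: "f (n + 1) \<le> r * f n" if "n \<ge> N" for n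
  proof -
    have "f n \<noteq> 0" using N[OF that] by auto
    then have "0 < f n" using nonneg[of n] by simp
    then show ?thesis using N[OF that] by (simp add: divide_less_eq mult.commute)
  qed
  have growth: "f (N + m) \<le> f N * r ^ m" for m
  proof (induction m)
    case 0
    then show ?case by simp
  next
    case (Suc m)
    have "f (N + Suc m) \<le> r * f (N + m)" using step[of "N + m"] by simp
    also have "\<dots> \<le> r * (f N * r ^ m)" using Suc.IH \<open>0 < L\<close> \<open>L < r\<close> by simp
    finally show ?case by (simp add: algebra_simps)
  qed
  have "f n \<le> f N / r ^ N * r ^ n" if "n \<ge> N" for n
  proof -
    have "f n \<le> f N * r ^ (n - N)" using growth[of "n - N"] that by simp
    also have "\<dots> = f N / r ^ N * r ^ n"
      using that \<open>0 < L\<close> \<open>L < r\<close> by (simp add: power_diff)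
    finally show ?thesis .
  qed
  then show ?thesis unfolding eventually_sequentially by blast
qed

lemma power_two_power_unbounded:
  fixes q B :: real
  assumes "1 < q"
  shows "\<not> (\<forall>\<^sub>F k in sequentially. q ^ (2 ^ k) \<le> B)"
proof
  assume "\<forall>\<^sub>F k in sequentially. q ^ (2 ^ k) \<le> B"
  then obtain K where K: "\<And>k. k \<ge> K \<Longrightarrow> q ^ (2 ^ k) \<le> B"
    unfolding eventually_sequentially by blast
  obtain m where "B < q ^ m" using real_arch_pow[OF \<open>1 < q\<close>] by blast
  also have "\<dots> \<le> q ^ (2 ^ max K m)"
  proof (rule power_increasing)
    show "m \<le> 2 ^ max K m" using less_exp[of "max K m"] by linarith
  qed (use \<open>1 < q\<close> in simp)
  also have "\<dots> \<le> B" using K by simp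
  finally show False by simp
qed

theorem mainTheorem2:
  shows "\<not> ((\<lambda>n. real (M (n + 1)) / real (M n)) \<longlonglongrightarrow> 2)"
proof
  assume lim: "(\<lambda>n. real (M (n + 1)) / real (M n)) \<longlonglongrightarrow> 2"
  define r :: real where "r = 41 / 20"
  have r4_pos: "0 < r ^ 4" by (simp add: r_def)
  obtain C where upper: "\<forall>\<^sub>F n in sequentially. real (M n) \<le> C * r ^ n"
    using ratio_limit_growth_bound[OF _ lim, of r] by (auto simp: r_def)
  have "filterlim (\<lambda>k. 2 ^ k * 4 :: nat) sequentially sequentially"
    by (rule filterlim_subseq) (simp add: strict_mono_def)
  with upper have "\<forall>\<^sub>F k in sequentially. real (M (2 ^ k * 4)) \<le> C * r ^ (2 ^ k * 4)"
    by (rule eventually_compose_filterlim)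
  then have "\<forall>\<^sub>F k in sequentially. (20 / r ^ 4) ^ (2 ^ k) \<le> 2 * C"
  proof (rule eventually_mono)
    fix k assume "real (M (2 ^ k * 4)) \<le> C * r ^ (2 ^ k * 4)"
    then have "(20::real) ^ (2 ^ k) \<le> 2 * C * (r ^ 4) ^ (2 ^ k)"
      using M_lower_bound[of k] by (simp add: power_mult mult.commute)
    then show "(20 / r ^ 4) ^ (2 ^ k) \<le> 2 * C"
      using r4_pos by (simp add: power_divide divide_le_eq)
  qed
  moreover have "1 < 20 / r ^ 4" by (simp add: r_def power_divide)
  ultimately show False using power_two_power_unbounded by blast
qed

end
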